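(* For all integers $1\leqslant k\leqslant d-1$, $$n(k,d)\geqslant \sum_{i=0}^{\lfloor k/2\rfloor}\binom{d}{i}.$$ Moreover, for all positive integers $k,d,t$ with $1\leqslant k\leqslant k+2t-2\leqslant d-1$, $$n(k,d)\leqslant 2^{d-t}+\sum_{i=0}^{\lceil (k+2t-2)/2\rceil}\binom{d}{i}.$$
   Context: A standard box in $\mathbb{R}^d$ is a set $K=K_1\times\cdots\times K_d$ where each $K_i\subset\mathbb{R}$ is a closed interval. For integers $1\leqslant k\leqslant d$, two standard boxes $K,L\subset\mathbb{R}^d$ are $k$-neighborly if $d-k\leqslant \dim(K\cap L)\leqslant d-1$, and a family of standard boxes is $k$-neighborly if every two distinct members are $k$-neighborly. $n(k,d)$ denotes the maximum possible cardinality of a $k$-neighborly family of standard boxes in $\mathbb{R}^d$. (Equivalently, $n(k,d)$ is the maximum number of vertices of a complete graph whose edges can be covered by $d$ complete bipartite subgraphs so that every edge is covered at least once and at most $k$ times.) *)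

theory Defs
  imports "HOL-Analysis.Analysis" "HOL-Library.Extended_Nat"
begin

definition standard_box :: "(real^'n) set \<Rightarrow> bool" where
  "standard_box K \<longleftrightarrow> (\<exists>a b. (\<forall>i. a $ i < b $ i) \<and> K = cbox a b)"

definition k_neighborly :: "nat \<Rightarrow> (real^'n) set \<Rightarrow> (real^'n) set \<Rightarrow> bool" where
  "k_neighborly k K L \<longleftrightarrow>
     int CARD('n) - int k \<le> aff_dim (K \<inter> L) \<and> aff_dim (K \<inter> L) \<le> int CARD('n) - 1"

definition k_neighborly_family :: "nat \<Rightarrow> (real^'n) set set \<Rightarrow> bool" where
  "k_neighborly_family k F \<longleftrightarrow>
     (\<forall>K\<in>F. standard_box K) \<and> (\<forall>K\<in>F. \<forall>L\<in>F. K \<noteq> L \<longrightarrow> k_neighborly k K L)"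

text \<open>n(k,d) with d = CARD('n), as an extended natural (supremum of family sizes;
  an infinite family counts as infinity).\<close>
definition n_nb :: "nat \<Rightarrow> 'n::finite itself \<Rightarrow> enat" where
  "n_nb k _ = Sup ((\<lambda>F. if finite F then enat (card F) else \<infinity>) `
                   {F :: (real^'n) set set. k_neighborly_family k F})"

end

theory Submission
  imports Defs
begin

text \<open>
  Lower bound: the boxes that are [0,1] on the coordinates in S and [1,2] elsewhere, for all sets S
  of at most k/2 coordinates, touch pairwise exactly along the symmetric difference of their index
  sets, which has between 1 and k elements.

  Upper bound: pairwise intersecting boxes share a point P. Recording coordinatewise whether a box
  ends at P (0), starts at P (1) or contains P in its interior (star) turns a k-neighborly family
  into words over {0,1,*} any two of which have 0 against 1 in between 1 and k positions. The 0-1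
  completions of distinct words are disjoint, so at most 2^(d-t) words have t or more stars. The
  words with fewer than t stars are determined by their sets of 1-positions, which are pairwise at
  Hamming distance at most k + 2(t-1); Kleitman's diameter theorem bounds their number by the
  Hamming ball of radius ceil((k+2t-2)/2). Kleitman's theorem follows by down-compression, which
  turns the bound on symmetric differences into one on unions, and then by shifting and induction
  on the ground set.
\<close>

lemma card_subsets_card_le:
  assumes "finite V"
  shows "card {X. X \<subseteq> V \<and> card X \<le> r} = (\<Sum>i=0..r. card V choose i)"
proof (induction r)
  case 0
  have "{X. X \<subseteq> V \<and> card X \<le> 0} = {{}}"
    using assms by (auto dest: finite_subset)
  then show ?case by simp
next
  case (Suc r)
  have "{X. X \<subseteq> V \<and> card X \<le> Suc r} =
      {X. X \<subseteq> V \<and> card X \<le> r} \<union> {X. X \<subseteq> V \<and> card X = Suc r}"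
    by auto
  moreover have "card ({X. X \<subseteq> V \<and> card X \<le> r} \<union> {X. X \<subseteq> V \<and> card X = Suc r}) =
      card {X. X \<subseteq> V \<and> card X \<le> r} + card {X. X \<subseteq> V \<and> card X = Suc r}"
    using assms by (intro card_Un_disjoint) (auto intro: finite_subset[of _ "Pow V"])
  ultimately show ?case
    using Suc n_subsets[OF assms] by simp
qed

lemma sum_choose_Suc_Suc:
  "(\<Sum>i=0..Suc r. Suc n choose i) = (\<Sum>i=0..Suc r. n choose i) + (\<Sum>i=0..r. n choose i)"
  by (induction r) simp_all

lemma card_le_sum_choose_if_complement_free:
  assumes V: "finite V" and FV: "F \<subseteq> Pow V" and compl: "\<And>X. X \<in> F \<Longrightarrow> V - X \<notin> F"
    and "card V \<le> 2*r+1"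
  shows "card F \<le> (\<Sum>i=0..r. card V choose i)"
proof -
  let ?S = "{X. X \<subseteq> V \<and> card X \<le> r}"
  have "inj_on (\<lambda>X. V - X) F"
    using FV by (auto simp: inj_on_def)
  then have "2 * card F = card F + card ((\<lambda>X. V - X) ` F)"
    by (simp add: card_image)
  also have "\<dots> = card (F \<union> (\<lambda>X. V - X) ` F)"
    using V FV compl by (intro card_Un_disjoint[symmetric]) (auto intro: finite_subset)
  also have "\<dots> \<le> card (Pow V)"
    using V FV by (intro card_mono) auto
  also have "\<dots> \<le> card (?S \<union> (\<lambda>X. V - X) ` ?S)"
  proof (intro card_mono)
    show "Pow V \<subseteq> ?S \<union> (\<lambda>X. V - X) ` ?S"
    proof
      fix X assume X: "X \<in> Pow V"
      then have "card (V - X) = card V - card X"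
        using V by (simp add: card_Diff_subset finite_subset)
      moreover have "X = V - (V - X)"
        using X by auto
      ultimately show "X \<in> ?S \<union> (\<lambda>X. V - X) ` ?S"
        using X \<open>card V \<le> 2*r+1\<close> by (cases "card X \<le> r") auto
    qed
  qed (use V in auto)
  also have "\<dots> \<le> card ?S + card ((\<lambda>X. V - X) ` ?S)"
    by (rule card_Un_le)
  also have "\<dots> \<le> 2 * card ?S"
    using card_image_le[of ?S "\<lambda>X. V - X"] V by simp
  finally show ?thesis
    using card_subsets_card_le[OF V] by simp
qed

definition compress :: "('a \<Rightarrow> bool) \<Rightarrow> ('a \<Rightarrow> 'a) \<Rightarrow> 'a set \<Rightarrow> 'a \<Rightarrow> 'a" where
  "compress P f F x = (if P x \<and> f x \<notin> F then f x else x)"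

lemma compress_moved:
  "compress P f F x \<noteq> x \<Longrightarrow> P x \<and> compress P f F x = f x"
  by (simp add: compress_def split: if_splits)

lemma compress_fixed:
  "compress P f F x = x \<Longrightarrow> P x \<Longrightarrow> f x \<noteq> x \<Longrightarrow> f x \<in> F"
  by (simp add: compress_def split: if_splits)

lemma inj_on_compress:
  assumes "inj_on f {x. P x}"
  shows "inj_on (compress P f F) F"
proof (rule inj_onI)
  fix x y assume "x \<in> F" "y \<in> F" "compress P f F x = compress P f F y"
  then show "x = y"
    using assms by (auto simp: compress_def inj_on_def split: if_splits)
qed

lemma compressed_family_exists:
  fixes w :: "'a \<Rightarrow> nat"
  assumes "finite F" "Q F"
    and inj: "\<And>j. j \<in> J \<Longrightarrow> inj_on (f j) {x. P j x}"
    and preserve: "\<And>G j. Q G \<Longrightarrow> j \<in> J \<Longrightarrow> Q (compress (P j) (f j) G ` G)"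
    and decrease: "\<And>G j x. Q G \<Longrightarrow> j \<in> J \<Longrightarrow> x \<in> G \<Longrightarrow> P j x \<Longrightarrow> w (f j x) < w x"
  shows "\<exists>G. card G = card F \<and> Q G \<and> (\<forall>j\<in>J. \<forall>x\<in>G. P j x \<longrightarrow> f j x \<in> G)"
  using assms(1,2)
proof (induction "\<Sum>x\<in>F. w x" arbitrary: F rule: less_induct)
  case less
  show ?case
  proof (cases "\<forall>j\<in>J. \<forall>x\<in>F. P j x \<longrightarrow> f j x \<in> F")
    case True
    with less.prems show ?thesis by blast
  next
    case False
    then obtain j x where jx: "j \<in> J" "x \<in> F" "P j x" "f j x \<notin> F"
      by blast
    let ?C = "compress (P j) (f j) F"
    have inj_C: "inj_on ?C F"
      using inj_on_compress[OF inj[OF \<open>j \<in> J\<close>]] .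
    have "(\<Sum>y\<in>?C ` F. w y) = (\<Sum>y\<in>F. w (?C y))"
      by (simp add: sum.reindex[OF inj_C])
    also have "\<dots> < (\<Sum>y\<in>F. w y)"
    proof (rule sum_strict_mono_ex1[OF \<open>finite F\<close>])
      show "\<forall>y\<in>F. w (?C y) \<le> w y"
        using decrease[OF \<open>Q F\<close> \<open>j \<in> J\<close>] by (auto simp: compress_def less_imp_le)
      show "\<exists>y\<in>F. w (?C y) < w y"
        using jx decrease[OF \<open>Q F\<close>] by (auto simp: compress_def)
    qed
    finally obtain G where "card G = card (?C ` F)" "Q G" "\<forall>j\<in>J. \<forall>x\<in>G. P j x \<longrightarrow> f j x \<in> G"
      using less.hyps less.prems preserve[OF \<open>Q F\<close> \<open>j \<in> J\<close>] by blast
    then show ?thesis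
      using card_image[OF inj_C] by auto
  qed
qed

lemma card_insert_Diff_le:
  assumes "finite A" "m \<in> A"
  shows "card (insert j (A - {m})) \<le> card A"
proof -
  have "card (insert j (A - {m})) \<le> Suc (card (A - {m}))"
    using assms(1) by (simp add: card_insert_if)
  also have "\<dots> = card A"
    using assms by (rule card_Suc_Diff1)
  finally show ?thesis .
qed

lemma card_union_shift_le_if_moved:
  fixes m j :: 'a and F :: "'a set set"
  defines "C \<equiv> compress (\<lambda>X. m \<in> X \<and> j \<notin> X) (\<lambda>X. insert j (X - {m})) F"
  assumes fin: "finite X" "finite Y" and "Y \<in> F" "C X \<noteq> X"
  shows "\<exists>Y'\<in>F. card (C X \<union> C Y) \<le> card (X \<union> Y')"
proof -
  have X: "m \<in> X" "j \<notin> X" "C X = insert j (X - {m})"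
    using compress_moved[OF \<open>C X \<noteq> X\<close>[unfolded C_def]] by (simp_all add: C_def)
  have finXY: "finite (X \<union> Y)"
    using fin by blast
  consider "C Y \<noteq> Y" | "m \<notin> Y" | "j \<in> Y" | "C Y = Y" "m \<in> Y" "j \<notin> Y"
    by blast
  then show ?thesis
  proof cases
    case 1
    then have "C Y = insert j (Y - {m})"
      using compress_moved[OF 1[unfolded C_def]] by (simp add: C_def)
    with X have "C X \<union> C Y = insert j ((X \<union> Y) - {m})"
      by auto
    then show ?thesis
      using card_insert_Diff_le[OF finXY] X \<open>Y \<in> F\<close> by auto
  next
    case 2
    then have "C Y = Y"
      by (simp add: C_def compress_def)
    with X 2 have "C X \<union> C Y = insert j ((X \<union> Y) - {m})"
      by auto
    then show ?thesis
      using card_insert_Diff_le[OF finXY] X \<open>Y \<in> F\<close> by auto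
  next
    case 3
    then have "C Y = Y"
      by (simp add: C_def compress_def)
    with X 3 have "C X \<union> C Y \<subseteq> X \<union> Y"
      by auto
    then show ?thesis
      using card_mono[OF finXY] \<open>Y \<in> F\<close> by blast
  next
    case 4
    have "insert j (Y - {m}) \<noteq> Y"
      using 4 by blast
    with 4 have "insert j (Y - {m}) \<in> F"
      using compress_fixed[of "\<lambda>X. m \<in> X \<and> j \<notin> X" "\<lambda>X. insert j (X - {m})" F Y]
      by (simp add: C_def)
    moreover have "C X \<union> C Y = X \<union> insert j (Y - {m})"
      using X 4 by auto
    ultimately show ?thesis
      by (intro bexI[of _ "insert j (Y - {m})"]) simp_all
  qed
qed

lemma card_union_shift_le:
  fixes m j :: 'a and F :: "'a set set"
  defines "C \<equiv> compress (\<lambda>X. m \<in> X \<and> j \<notin> X) (\<lambda>X. insert j (X - {m})) F"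
  assumes fin: "\<And>X. X \<in> F \<Longrightarrow> finite X" and "X \<in> F" "Y \<in> F"
  shows "\<exists>X'\<in>F. \<exists>Y'\<in>F. card (C X \<union> C Y) \<le> card (X' \<union> Y')"
proof -
  note moved = card_union_shift_le_if_moved[where m = m and j = j and F = F, folded C_def]
  consider "C X \<noteq> X" | "C Y \<noteq> Y" | "C X = X" "C Y = Y"
    by blast
  then show ?thesis
  proof cases
    case 1
    with moved[OF fin[OF \<open>X \<in> F\<close>] fin[OF \<open>Y \<in> F\<close>] \<open>Y \<in> F\<close>] have "\<exists>Y'\<in>F. card (C X \<union> C Y) \<le> card (X \<union> Y')" .
    then show ?thesis
      using \<open>X \<in> F\<close> by (rule bexI)
  next
    case 2
    with moved[OF fin[OF \<open>Y \<in> F\<close>] fin[OF \<open>X \<in> F\<close>] \<open>X \<in> F\<close>] obtain X' where "X' \<in> F" "card (C Y \<union> C X) \<le> card (Y \<union> X')"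
      by blast
    then have "card (C X \<union> C Y) \<le> card (X' \<union> Y)"
      by (simp add: Un_commute)
    then show ?thesis
      using \<open>X' \<in> F\<close> \<open>Y \<in> F\<close> by blast
  next
    case 3
    then have "card (C X \<union> C Y) \<le> card (X \<union> Y)"
      by simp
    then show ?thesis
      using \<open>X \<in> F\<close> \<open>Y \<in> F\<close> by blast
  qed
qed

lemma sym_diff_down_shift_subset_if_moved:
  fixes i :: 'a and F :: "'a set set"
  defines "C \<equiv> compress (\<lambda>X. i \<in> X) (\<lambda>X. X - {i}) F"
  assumes "Y \<in> F" "C X \<noteq> X"
  shows "\<exists>Y'\<in>F. sym_diff (C X) (C Y) \<subseteq> sym_diff X Y'"
proof -
  have X: "i \<in> X" "C X = X - {i}"
    using compress_moved[OF \<open>C X \<noteq> X\<close>[unfolded C_def]] by (simp_all add: C_def)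
  consider "C Y \<noteq> Y" | "i \<notin> Y" | "C Y = Y" "i \<in> Y"
    by blast
  then show ?thesis
  proof cases
    case 1
    then have "C Y = Y - {i}"
      using compress_moved[OF 1[unfolded C_def]] by (simp add: C_def)
    with X have "sym_diff (C X) (C Y) \<subseteq> sym_diff X Y"
      by auto
    then show ?thesis
      using \<open>Y \<in> F\<close> by (rule bexI)
  next
    case 2
    then have "C Y = Y"
      by (simp add: C_def compress_def)
    with X 2 have "sym_diff (C X) (C Y) \<subseteq> sym_diff X Y"
      by auto
    then show ?thesis
      using \<open>Y \<in> F\<close> by (rule bexI)
  next
    case 3
    have "Y - {i} \<noteq> Y"
      using 3 by blast
    with 3 have "Y - {i} \<in> F"
      using compress_fixed[of "\<lambda>X. i \<in> X" "\<lambda>X. X - {i}" F Y] by (simp add: C_def)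
    have "sym_diff (C X) (C Y) \<subseteq> sym_diff X (Y - {i})"
      using X 3 by auto
    then show ?thesis
      using \<open>Y - {i} \<in> F\<close> by (rule bexI)
  qed
qed

lemma sym_diff_down_shift_subset:
  fixes i :: 'a and F :: "'a set set"
  defines "C \<equiv> compress (\<lambda>X. i \<in> X) (\<lambda>X. X - {i}) F"
  assumes "X \<in> F" "Y \<in> F"
  shows "\<exists>X'\<in>F. \<exists>Y'\<in>F. sym_diff (C X) (C Y) \<subseteq> sym_diff X' Y'"
proof -
  note moved = sym_diff_down_shift_subset_if_moved[where i = i and F = F, folded C_def]
  consider "C X \<noteq> X" | "C Y \<noteq> Y" | "C X = X" "C Y = Y"
    by blast
  then show ?thesis
  proof cases
    case 1
    with moved[OF \<open>Y \<in> F\<close>] have "\<exists>Y'\<in>F. sym_diff (C X) (C Y) \<subseteq> sym_diff X Y'" .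
    then show ?thesis
      using \<open>X \<in> F\<close> by (rule bexI)
  next
    case 2
    with moved[OF \<open>X \<in> F\<close>] obtain X' where "X' \<in> F" "sym_diff (C Y) (C X) \<subseteq> sym_diff Y X'"
      by blast
    then have "sym_diff (C X) (C Y) \<subseteq> sym_diff X' Y"
      by blast
    then show ?thesis
      using \<open>X' \<in> F\<close> \<open>Y \<in> F\<close> by blast
  next
    case 3
    then have "sym_diff (C X) (C Y) \<subseteq> sym_diff X Y"
      by simp
    then show ?thesis
      using \<open>X \<in> F\<close> \<open>Y \<in> F\<close> by blast
  qed
qed

lemma shifted_family_exists:
  assumes "finite V" "F \<subseteq> Pow V" "\<forall>X\<in>F. \<forall>Y\<in>F. card (X \<union> Y) \<le> s"
  shows "\<exists>G. card G = card F \<and> G \<subseteq> Pow V \<and> (\<forall>X\<in>G. \<forall>Y\<in>G. card (X \<union> Y) \<le> s) \<and>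
    (\<forall>j\<in>V. \<forall>X\<in>G. m \<in> X \<and> j \<notin> X \<longrightarrow> insert j (X - {m}) \<in> G)"
proof -
  let ?Q = "\<lambda>G. G \<subseteq> Pow V \<and> (\<forall>X\<in>G. \<forall>Y\<in>G. card (X \<union> Y) \<le> s)"
  have "\<exists>G. card G = card F \<and> ?Q G \<and>
      (\<forall>j\<in>V. \<forall>X\<in>G. m \<in> X \<and> j \<notin> X \<longrightarrow> insert j (X - {m}) \<in> G)"
  proof (rule compressed_family_exists[where Q = ?Q and J = V and P = "\<lambda>j X. m \<in> X \<and> j \<notin> X"
        and f = "\<lambda>j X. insert j (X - {m})" and w = "\<lambda>X. if m \<in> X then 1 else 0"])
    show "finite F"
      using assms(1,2) by (simp add: finite_subset)
    show "?Q F"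
      using assms(2,3) by blast
    show "inj_on (\<lambda>X. insert j (X - {m})) {X. m \<in> X \<and> j \<notin> X}" for j
      by (auto simp: inj_on_def)
  next
    fix G j
    let ?C = "compress (\<lambda>X. m \<in> X \<and> j \<notin> X) (\<lambda>X. insert j (X - {m})) G"
    assume "?Q G" "j \<in> V"
    then have "?C X \<in> Pow V" if "X \<in> G" for X
      using that by (auto simp: compress_def)
    moreover have "card (A \<union> B) \<le> s" if AB: "A \<in> ?C ` G" "B \<in> ?C ` G" for A B
    proof -
      have fin: "\<And>X. X \<in> G \<Longrightarrow> finite X"
        using \<open>?Q G\<close> \<open>finite V\<close> by (auto intro: finite_subset)
      obtain X Y where XY: "X \<in> G" "Y \<in> G" and "A = ?C X" "B = ?C Y"
        using AB by blast
      then obtain X' Y' where "X' \<in> G" "Y' \<in> G" "card (A \<union> B) \<le> card (X' \<union> Y')"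
        using card_union_shift_le[OF fin XY, of m j] by blast
      moreover have "card (X' \<union> Y') \<le> s"
        using \<open>?Q G\<close> calculation by blast
      ultimately show ?thesis
        by linarith
    qed
    ultimately show "?Q (?C ` G)"
      by blast
  next
    fix j X
    assume "m \<in> X \<and> j \<notin> X"
    then show "(if m \<in> insert j (X - {m}) then 1 else 0) < (if m \<in> X then 1 else (0::nat))"
      by auto
  qed
  then show ?thesis
    by (simp only: conj_assoc)
qed

lemma down_shifted_family_exists:
  assumes "finite V" "F \<subseteq> Pow V" "\<forall>X\<in>F. \<forall>Y\<in>F. card (sym_diff X Y) \<le> s"
  shows "\<exists>G. card G = card F \<and> G \<subseteq> Pow V \<and> (\<forall>X\<in>G. \<forall>Y\<in>G. card (sym_diff X Y) \<le> s) \<and>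
    (\<forall>i. \<forall>X\<in>G. i \<in> X \<longrightarrow> X - {i} \<in> G)"
proof -
  let ?Q = "\<lambda>G. G \<subseteq> Pow V \<and> (\<forall>X\<in>G. \<forall>Y\<in>G. card (sym_diff X Y) \<le> s)"
  have "\<exists>G. card G = card F \<and> ?Q G \<and> (\<forall>i\<in>UNIV. \<forall>X\<in>G. i \<in> X \<longrightarrow> X - {i} \<in> G)"
  proof (rule compressed_family_exists[where Q = ?Q and J = UNIV and P = "\<lambda>i X. i \<in> X"
        and f = "\<lambda>i X. X - {i}" and w = card])
    show "finite F"
      using assms(1,2) by (simp add: finite_subset)
    show "?Q F"
      using assms(2,3) by blast
    show "inj_on (\<lambda>X. X - {i}) {X. i \<in> X}" for i
      by (rule inj_onI) (metis insert_Diff mem_Collect_eq)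
  next
    fix G :: "'a set set" and i :: 'a
    let ?C = "compress (\<lambda>X. i \<in> X) (\<lambda>X. X - {i}) G"
    assume "?Q G"
    then have "G \<subseteq> Pow V"
      by blast
    then have "?C ` G \<subseteq> Pow V"
      by (auto simp: compress_def)
    moreover have "card (sym_diff A B) \<le> s" if AB: "A \<in> ?C ` G" "B \<in> ?C ` G" for A B
    proof -
      obtain X Y where XY: "X \<in> G" "Y \<in> G" and "A = ?C X" "B = ?C Y"
        using AB by blast
      then obtain X' Y' where "X' \<in> G" "Y' \<in> G" "sym_diff A B \<subseteq> sym_diff X' Y'"
        using sym_diff_down_shift_subset[OF XY, of i] by blast
      moreover have "finite (sym_diff X' Y')"
        using \<open>?Q G\<close> \<open>finite V\<close> \<open>X' \<in> G\<close> \<open>Y' \<in> G\<close> by (meson PowD finite_Diff finite_UnI finite_subset subsetD)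
      ultimately have "card (sym_diff A B) \<le> card (sym_diff X' Y')"
        by (simp add: card_mono)
      also have "\<dots> \<le> s"
        using \<open>?Q G\<close> \<open>X' \<in> G\<close> \<open>Y' \<in> G\<close> by blast
      finally show ?thesis .
    qed
    ultimately show "?Q (?C ` G)"
      by (intro conjI ballI)
  next
    fix G :: "'a set set" and i :: 'a and X
    assume "?Q G" "X \<in> G" "i \<in> X"
    then have "finite X"
      using \<open>finite V\<close> by (meson PowD finite_subset subsetD)
    then show "card (X - {i}) < card X"
      using \<open>i \<in> X\<close> by (rule card_Diff1_less)
  qed
  then show ?thesis
    by (simp only: ball_UNIV conj_assoc)
qed

lemma Diff_mem_if_closed_under_removal:
  assumes closed: "\<forall>i. \<forall>X\<in>G. i \<in> X \<longrightarrow> X - {i} \<in> G" and "X \<in> G" "finite Y"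
  shows "X - Y \<in> G"
  using \<open>finite Y\<close>
proof (induction Y rule: finite_induct)
  case empty
  then show ?case
    using \<open>X \<in> G\<close> by simp
next
  case (insert i Y)
  show ?case
  proof (cases "i \<in> X - Y")
    case True
    then have "(X - Y) - {i} \<in> G"
      using closed insert.IH by blast
    moreover have "X - insert i Y = (X - Y) - {i}"
      by blast
    ultimately show ?thesis
      by simp
  next
    case False
    then have "X - insert i Y = X - Y"
      by blast
    then show ?thesis
      using insert.IH by simp
  qed
qed

lemma card_union_lt_if_shifted:
  assumes "finite V" "G \<subseteq> Pow V" "s < card V"
    and shifted: "\<forall>j\<in>V. \<forall>X\<in>G. m \<in> X \<and> j \<notin> X \<longrightarrow> insert j (X - {m}) \<in> G"
    and unions: "\<forall>X\<in>G. \<forall>Y\<in>G. card (X \<union> Y) \<le> s"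
    and XY: "X \<in> G" "Y \<in> G" "m \<in> X" "m \<in> Y"
  shows "card (X \<union> Y) < s"
proof (rule ccontr)
  assume "\<not> card (X \<union> Y) < s"
  with unions XY have "card (X \<union> Y) = s"
    by (meson le_neq_implies_less)
  moreover have "X \<union> Y \<subseteq> V"
    using XY \<open>G \<subseteq> Pow V\<close> by blast
  moreover have "X \<union> Y \<noteq> V"
    using \<open>card (X \<union> Y) = s\<close> \<open>s < card V\<close> by auto
  ultimately obtain j where j: "j \<in> V" "j \<notin> X \<union> Y"
    by blast
  then have "insert j (Y - {m}) \<in> G"
    using shifted XY by blast
  then have "card (X \<union> insert j (Y - {m})) \<le> s"
    using unions XY by blast
  moreover have "X \<union> insert j (Y - {m}) = insert j (X \<union> Y)"
    using XY by auto
  moreover have "finite (X \<union> Y)"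
    using \<open>X \<union> Y \<subseteq> V\<close> \<open>finite V\<close> by (rule finite_subset)
  ultimately show False
    using j \<open>card (X \<union> Y) = s\<close> by simp
qed

lemma card_split_by_member:
  assumes "finite G"
  shows "card G = card {X\<in>G. m \<notin> X} + card ((\<lambda>X. X - {m}) ` {X\<in>G. m \<in> X})"
proof -
  have "card G = card ({X\<in>G. m \<notin> X} \<union> {X\<in>G. m \<in> X})"
    by (rule arg_cong[of _ _ card]) auto
  also have "\<dots> = card {X\<in>G. m \<notin> X} + card {X\<in>G. m \<in> X}"
    using assms by (intro card_Un_disjoint) auto
  also have "card {X\<in>G. m \<in> X} = card ((\<lambda>X. X - {m}) ` {X\<in>G. m \<in> X})"
    by (rule card_image[symmetric]) (auto simp: inj_on_def)
  finally show ?thesis .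
qed

lemma card_shifted_family_le_sum_choose:
  assumes V: "finite V" and "m \<in> V" and GV: "G \<subseteq> Pow V"
    and shifted: "\<forall>j\<in>V. \<forall>X\<in>G. m \<in> X \<and> j \<notin> X \<longrightarrow> insert j (X - {m}) \<in> G"
    and unions: "\<forall>X\<in>G. \<forall>Y\<in>G. card (X \<union> Y) \<le> 2*r" and "0 < r" "2*r+2 \<le> card V"
    and smaller: "\<And>H q. H \<subseteq> Pow (V - {m}) \<Longrightarrow> 2*q+1 \<le> card (V - {m}) \<Longrightarrow>
      (\<forall>X\<in>H. \<forall>Y\<in>H. card (X \<union> Y) \<le> 2*q) \<Longrightarrow> card H \<le> (\<Sum>i=0..q. card (V - {m}) choose i)"
  shows "card G \<le> (\<Sum>i=0..r. card V choose i)"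
proof -
  let ?V' = "V - {m}"
  let ?G0 = "{X\<in>G. m \<notin> X}"
  let ?G1 = "(\<lambda>X. X - {m}) ` {X\<in>G. m \<in> X}"
  obtain r' where r: "r = Suc r'"
    using \<open>0 < r\<close> not0_implies_Suc by blast
  have card_V: "card V = Suc (card ?V')"
    by (rule card_Suc_Diff1[OF V \<open>m \<in> V\<close>, symmetric])
  have "card ?G0 \<le> (\<Sum>i=0..r. card ?V' choose i)"
    using GV unions card_V \<open>2*r+2 \<le> card V\<close> by (intro smaller) auto
  moreover have "card ?G1 \<le> (\<Sum>i=0..r'. card ?V' choose i)"
  proof (rule smaller)
    show "?G1 \<subseteq> Pow ?V'"
      using GV by auto
    show "2*r'+1 \<le> card ?V'"
      using card_V r \<open>2*r+2 \<le> card V\<close> by simp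
    show "\<forall>X'\<in>?G1. \<forall>Y'\<in>?G1. card (X' \<union> Y') \<le> 2*r'"
    proof (intro ballI)
      fix X' Y' assume "X' \<in> ?G1" "Y' \<in> ?G1"
      then obtain X Y where XY: "X \<in> G" "Y \<in> G" "m \<in> X" "m \<in> Y" "X' = X - {m}" "Y' = Y - {m}"
        by blast
      have "card (X \<union> Y) < 2*r"
        using card_union_lt_if_shifted[OF V GV _ shifted unions XY(1-4)] \<open>2*r+2 \<le> card V\<close> by simp
      moreover have "X' \<union> Y' = (X \<union> Y) - {m}"
        using XY by blast
      moreover have "finite (X \<union> Y)"
        using XY GV V by (meson PowD finite_UnI finite_subset subsetD)
      ultimately show "card (X' \<union> Y') \<le> 2*r'"
        using XY r by (simp add: card_Diff_singleton)
    qed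
  qed
  moreover have "card G = card ?G0 + card ?G1"
    using card_split_by_member[of G m] GV V by (simp add: finite_subset)
  ultimately have "card G \<le> (\<Sum>i=0..Suc r'. card ?V' choose i) + (\<Sum>i=0..r'. card ?V' choose i)"
    unfolding r by linarith
  then show ?thesis
    unfolding r card_V sum_choose_Suc_Suc .
qed

theorem card_le_sum_choose_if_unions_le:
  assumes "finite V" "F \<subseteq> Pow V" "2*r+1 \<le> card V" "\<forall>X\<in>F. \<forall>Y\<in>F. card (X \<union> Y) \<le> 2*r"
  shows "card F \<le> (\<Sum>i=0..r. card V choose i)"
  using assms
proof (induction "card V" arbitrary: V F r rule: less_induct)
  case less
  note V = \<open>finite V\<close> and FV = \<open>F \<subseteq> Pow V\<close>
    and unions = \<open>\<forall>X\<in>F. \<forall>Y\<in>F. card (X \<union> Y) \<le> 2*r\<close>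
  consider "r = 0" | "card V = 2*r+1" | "r > 0" "2*r+2 \<le> card V"
    using \<open>2*r+1 \<le> card V\<close> by linarith
  then show ?case
  proof cases
    case 1
    have "X = {}" if "X \<in> F" for X
    proof -
      have "card (X \<union> X) \<le> 2*r"
        using unions that by blast
      moreover have "finite X"
        using that FV V by (meson PowD finite_subset subsetD)
      ultimately show ?thesis
        using 1 by simp
    qed
    then have "F \<subseteq> {{}}"
      by blast
    then have "card F \<le> 1"
      using card_mono[of "{{}}" F] by simp
    then show ?thesis
      by (simp add: 1)
  next
    case 2
    have "V - X \<notin> F" if "X \<in> F" for X
    proof
      assume "V - X \<in> F"
      then have "card (X \<union> (V - X)) \<le> 2*r"
        using unions \<open>X \<in> F\<close> by blast
      moreover have "X \<union> (V - X) = V"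
        using \<open>X \<in> F\<close> FV by auto
      ultimately show False
        using 2 by simp
    qed
    then show ?thesis
      using card_le_sum_choose_if_complement_free[OF V FV] 2 by simp
  next
    case 3
    then have "V \<noteq> {}"
      by auto
    then obtain m where "m \<in> V"
      by blast
    from shifted_family_exists[OF V FV unions, of m]
    obtain G where "card G = card F" and GV: "G \<subseteq> Pow V"
      and unions_G: "\<forall>X\<in>G. \<forall>Y\<in>G. card (X \<union> Y) \<le> 2*r"
      and shifted: "\<forall>j\<in>V. \<forall>X\<in>G. m \<in> X \<and> j \<notin> X \<longrightarrow> insert j (X - {m}) \<in> G"
      by (elim exE conjE)
    have "card G \<le> (\<Sum>i=0..r. card V choose i)"
    proof (rule card_shifted_family_le_sum_choose[OF V \<open>m \<in> V\<close> GV shifted unions_G 3])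
      fix H q
      assume "H \<subseteq> Pow (V - {m})" "2*q+1 \<le> card (V - {m})" "\<forall>X\<in>H. \<forall>Y\<in>H. card (X \<union> Y) \<le> 2*q"
      moreover have "card (V - {m}) < card V"
        using V \<open>m \<in> V\<close> by (rule card_Diff1_less)
      ultimately show "card H \<le> (\<Sum>i=0..q. card (V - {m}) choose i)"
        using less.hyps V by blast
    qed
    then show ?thesis
      using \<open>card G = card F\<close> by simp
  qed
qed

theorem kleitman_diameter:
  assumes V: "finite V" and FV: "F \<subseteq> Pow V"
    and diam: "\<forall>X\<in>F. \<forall>Y\<in>F. card (sym_diff X Y) \<le> D" and "D \<le> 2*r" "D < card V"
  shows "card F \<le> (\<Sum>i=0..r. card V choose i)"
proof (cases "2*r+1 \<le> card V")
  case True
  from down_shifted_family_exists[OF V FV diam]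
  obtain G where "card G = card F" and GV: "G \<subseteq> Pow V"
    and diam_G: "\<forall>X\<in>G. \<forall>Y\<in>G. card (sym_diff X Y) \<le> D"
    and closed: "\<forall>i. \<forall>X\<in>G. i \<in> X \<longrightarrow> X - {i} \<in> G"
    by (elim exE conjE)
  have "card (X \<union> Y) \<le> 2*r" if "X \<in> G" "Y \<in> G" for X Y
  proof -
    have "finite Y"
      using that GV V by (meson PowD finite_subset subsetD)
    then have "X - Y \<in> G"
      using Diff_mem_if_closed_under_removal[OF closed \<open>X \<in> G\<close>] by blast
    then have "card (sym_diff (X - Y) Y) \<le> D"
      using diam_G \<open>Y \<in> G\<close> by blast
    moreover have "sym_diff (X - Y) Y = X \<union> Y"
      by blast
    ultimately show ?thesis
      using \<open>D \<le> 2*r\<close> by simp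
  qed
  then have "card G \<le> (\<Sum>i=0..r. card V choose i)"
    using card_le_sum_choose_if_unions_le[OF V GV True] by blast
  then show ?thesis
    using \<open>card G = card F\<close> by simp
next
  case False
  have "V - X \<notin> F" if "X \<in> F" for X
  proof
    assume "V - X \<in> F"
    then have "card (sym_diff X (V - X)) \<le> D"
      using diam \<open>X \<in> F\<close> by blast
    moreover have "sym_diff X (V - X) = V"
      using \<open>X \<in> F\<close> FV by blast
    ultimately show False
      using \<open>D < card V\<close> by simp
  qed
  then show ?thesis
    using card_le_sum_choose_if_complement_free[OF V FV] False by simp
qed

text \<open>A word over {0,1,*} indexed by V is given by its sets of 0- and 1-positions; distinct words
  of the family must have 0 against 1 in some position.\<close>

locale ternary_words =
  fixes V :: "'a set" and W :: "'w set" and zeros ones :: "'w \<Rightarrow> 'a set"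
  assumes finite_V: "finite V" and finite_W: "finite W"
    and letters_subset: "w \<in> W \<Longrightarrow> zeros w \<union> ones w \<subseteq> V"
    and letters_disjoint: "w \<in> W \<Longrightarrow> zeros w \<inter> ones w = {}"
    and conflict: "u \<in> W \<Longrightarrow> w \<in> W \<Longrightarrow> u \<noteq> w \<Longrightarrow> zeros u \<inter> ones w \<union> ones u \<inter> zeros w \<noteq> {}"
begin

definition stars :: "'w \<Rightarrow> 'a set" where
  "stars w = V - zeros w - ones w"

definition completions :: "'w \<Rightarrow> 'a set set" where
  "completions w = (\<lambda>Y. ones w \<union> Y) ` Pow (stars w)"

lemma card_completions:
  assumes "w \<in> W"
  shows "card (completions w) = 2 ^ card (stars w)"
proof -
  have "inj_on (\<lambda>Y. ones w \<union> Y) (Pow (stars w))"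
    by (rule inj_onI) (auto simp: stars_def)
  then show ?thesis
    using finite_V by (simp add: completions_def card_image card_Pow stars_def)
qed

lemma completions_subset_Pow: "w \<in> W \<Longrightarrow> completions w \<subseteq> Pow V"
  using letters_subset by (auto simp: completions_def stars_def)

lemma disjoint_completions:
  assumes "u \<in> W" "w \<in> W" "u \<noteq> w"
  shows "completions u \<inter> completions w = {}"
proof -
  have "ones u \<union> Y \<noteq> ones w \<union> Z" if "Y \<subseteq> stars u" "Z \<subseteq> stars w" for Y Z
    using conflict[OF assms] letters_disjoint[OF assms(1)] letters_disjoint[OF assms(2)] that
    by (auto simp: stars_def)
  then show ?thesis
    by (auto simp: completions_def)
qed

lemma card_many_stars:
  "card {w\<in>W. t \<le> card (stars w)} * 2^t \<le> 2 ^ card V"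
proof -
  let ?M = "{w\<in>W. t \<le> card (stars w)}"
  have "card ?M * 2^t = (\<Sum>w\<in>?M. 2^t)"
    by simp
  also have "\<dots> \<le> (\<Sum>w\<in>?M. card (completions w))"
    by (intro sum_mono) (simp add: card_completions)
  also have "\<dots> = card (\<Union>w\<in>?M. completions w)"
    using finite_W disjoint_completions finite_V
    by (intro card_UN_disjoint[symmetric]) (auto simp: completions_def stars_def)
  also have "\<dots> \<le> card (Pow V)"
    using completions_subset_Pow finite_V by (intro card_mono) auto
  finally show ?thesis
    using finite_V by (simp add: card_Pow)
qed

lemma card_few_stars:
  assumes conflict_le: "\<And>u w. u \<in> W \<Longrightarrow> w \<in> W \<Longrightarrow> u \<noteq> w \<Longrightarrow> card (zeros u \<inter> ones w \<union> ones u \<inter> zeros w) \<le> k"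
    and "k + 2*(t-1) \<le> 2*r" "k + 2*(t-1) < card V"
  shows "card {w\<in>W. card (stars w) < t} \<le> (\<Sum>i=0..r. card V choose i)"
proof -
  let ?S = "{w\<in>W. card (stars w) < t}"
  have inj: "inj_on ones ?S"
  proof (rule inj_onI)
    fix u w assume "u \<in> ?S" "w \<in> ?S" "ones u = ones w"
    then show "u = w"
      using conflict letters_disjoint by blast
  qed
  have "card (sym_diff (ones u) (ones w)) \<le> k + 2*(t-1)" if "u \<in> ?S" "w \<in> ?S" for u w
  proof (cases "u = w")
    case False
    have "sym_diff (ones u) (ones w) \<subseteq> (zeros u \<inter> ones w \<union> ones u \<inter> zeros w) \<union> stars u \<union> stars w"
      using letters_subset that by (auto simp: stars_def)
    then have "card (sym_diff (ones u) (ones w))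
        \<le> card ((zeros u \<inter> ones w \<union> ones u \<inter> zeros w) \<union> stars u \<union> stars w)"
      using finite_V letters_subset that by (intro card_mono) (auto simp: stars_def intro: finite_subset)
    also have "\<dots> \<le> card (zeros u \<inter> ones w \<union> ones u \<inter> zeros w) + card (stars u) + card (stars w)"
      by (meson add_mono card_Un_le le_trans order_refl)
    also have "\<dots> \<le> k + 2*(t-1)"
      using conflict_le[OF _ _ False] that by fastforce
    finally show ?thesis .
  qed simp
  then have "\<forall>X\<in>ones ` ?S. \<forall>Y\<in>ones ` ?S. card (sym_diff X Y) \<le> k + 2*(t-1)"
    by blast
  moreover have "ones ` ?S \<subseteq> Pow V"
    using letters_subset by blast
  ultimately have "card (ones ` ?S) \<le> (\<Sum>i=0..r. card V choose i)"
    using kleitman_diameter[OF finite_V _ _ assms(2,3)] by blast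
  then show ?thesis
    using card_image[OF inj] by simp
qed

lemma card_le:
  assumes "\<And>u w. u \<in> W \<Longrightarrow> w \<in> W \<Longrightarrow> u \<noteq> w \<Longrightarrow> card (zeros u \<inter> ones w \<union> ones u \<inter> zeros w) \<le> k"
    and "k + 2*(t-1) \<le> 2*r" "k + 2*(t-1) < card V"
  shows "card W \<le> 2^(card V - t) + (\<Sum>i=0..r. card V choose i)"
proof -
  have "W = {w\<in>W. t \<le> card (stars w)} \<union> {w\<in>W. card (stars w) < t}"
    by auto
  then have "card W \<le> card {w\<in>W. t \<le> card (stars w)} + card {w\<in>W. card (stars w) < t}"
    by (metis card_Un_le)
  moreover have "card {w\<in>W. t \<le> card (stars w)} \<le> 2^(card V - t)"
  proof -
    have "t \<le> card V"
      using assms(3) by linarith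
    then have "(2::nat) ^ card V = 2^(card V - t) * 2^t"
      by (simp add: power_add[symmetric])
    then show ?thesis
      using card_many_stars[of t] by simp
  qed
  ultimately show ?thesis
    using card_few_stars[OF assms] by linarith
qed

end

lemma span_translated_cbox_cart:
  fixes u v :: "real^'n"
  assumes "\<forall>i. u$i \<le> v$i"
  shows "span ((\<lambda>x. x - u) ` cbox u v) = {x. \<forall>i. i \<notin> {i. u$i < v$i} \<longrightarrow> x$i = 0}"
    (is "span ?S = ?T")
proof (rule span_subspace)
  show "?S \<subseteq> ?T"
  proof (rule image_subsetI, intro CollectI allI impI)
    fix x i assume "x \<in> cbox u v" "i \<notin> {i. u$i < v$i}"
    have "u$i \<le> x$i" "x$i \<le> v$i" "v$i \<le> u$i"
      using \<open>x \<in> cbox u v\<close> \<open>i \<notin> {i. u$i < v$i}\<close> by (simp_all add: mem_box_cart)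
    then show "(x - u)$i = 0"
      by simp
  qed
  show "subspace ?T"
    by (auto simp: subspace_def)
  show "?T \<subseteq> span ?S"
  proof
    fix x assume "x \<in> ?T"
    have "x$i *\<^sub>R axis i 1 \<in> span ?S" for i
    proof (cases "u$i < v$i")
      case True
      then have "u + (v$i - u$i) *\<^sub>R axis i 1 \<in> cbox u v"
        using assms by (auto simp: mem_box_cart axis_def)
      then have "(v$i - u$i) *\<^sub>R axis i (1::real) \<in> ?S"
        by (rule rev_image_eqI) simp
      then have "(x$i / (v$i - u$i)) *\<^sub>R ((v$i - u$i) *\<^sub>R axis i (1::real)) \<in> span ?S"
        by (intro span_mul span_base)
      then show ?thesis
        using True by simp
    next
      case False
      then have "x$i = 0"
        using \<open>x \<in> ?T\<close> by simp
      then show ?thesis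
        by (simp add: span_zero)
    qed
    then have "(\<Sum>i\<in>UNIV. x$i *\<^sub>R axis i 1) \<in> span ?S"
      by (intro span_sum)
    then show "x \<in> span ?S"
      using basis_expansion[of x] by (simp add: scalar_mult_eq_scaleR)
  qed
qed

lemma aff_dim_cbox_cart:
  fixes u v :: "real^'n"
  assumes "\<forall>i. u$i \<le> v$i"
  shows "aff_dim (cbox u v) = int (card {i. u$i < v$i})"
proof -
  have "u \<in> cbox u v"
    using assms by (simp add: mem_box_cart)
  then have "aff_dim (cbox u v) = int (dim ((\<lambda>x. x - u) ` cbox u v))"
    by (intro aff_dim_eq_dim_subtract hull_inc)
  also have "\<dots> = int (dim (span ((\<lambda>x. x - u) ` cbox u v)))"
    by (simp only: dim_span)
  also have "\<dots> = int (card {i. u$i < v$i})"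
    by (simp only: span_translated_cbox_cart[OF assms] dim_vec_eq[symmetric] dim_substandard_cart)
  finally show ?thesis .
qed

lemma k_neighborly_cbox_iff:
  fixes a b c e :: "real^'n"
  assumes "\<forall>i. a$i < b$i" "\<forall>i. c$i < e$i" and meet: "\<forall>i. a$i \<le> e$i \<and> c$i \<le> b$i"
  shows "k_neighborly k (cbox a b) (cbox c e) \<longleftrightarrow>
    {i. b$i = c$i \<or> e$i = a$i} \<noteq> {} \<and> card {i. b$i = c$i \<or> e$i = a$i} \<le> k"
proof -
  let ?lo = "\<chi> i. max (a$i) (c$i)" and ?hi = "\<chi> i. min (b$i) (e$i)"
  let ?T = "{i. b$i = c$i \<or> e$i = a$i}"
  have "cbox a b \<inter> cbox c e = cbox ?lo ?hi"
    using Int_interval_cart[of a b c e] by (simp add: interval_cbox_cart)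
  moreover have "\<forall>i. ?lo$i \<le> ?hi$i"
    using assms by (simp add: less_imp_le)
  moreover have "{i. ?lo$i < ?hi$i} = UNIV - ?T"
  proof (rule set_eqI)
    fix i
    have "a$i < b$i" "c$i < e$i" "a$i \<le> e$i" "c$i \<le> b$i"
      using assms by auto
    then show "i \<in> {i. ?lo$i < ?hi$i} \<longleftrightarrow> i \<in> UNIV - ?T"
      by (auto simp: max_def min_def)
  qed
  moreover have "card ?T \<le> CARD('n)"
    by (rule card_mono) auto
  ultimately have "aff_dim (cbox a b \<inter> cbox c e) = int CARD('n) - int (card ?T)"
    by (simp add: aff_dim_cbox_cart card_Diff_subset of_nat_diff)
  moreover have "?T \<noteq> {} \<longleftrightarrow> 0 < card ?T"
    by (simp add: card_gt_0_iff)
  ultimately show ?thesis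
    unfolding k_neighborly_def by auto
qed

lemma k_neighborly_imp_Int_nonempty:
  assumes "k_neighborly k K L" "k \<le> CARD('n)"
  shows "K \<inter> (L :: (real^'n) set) \<noteq> {}"
  using assms by (auto simp: k_neighborly_def)

definition subset_box :: "'n set \<Rightarrow> (real^'n) set" where
  "subset_box S = cbox (\<chi> i. if i \<in> S then 0 else 1) (\<chi> i. if i \<in> S then 1 else 2)"

lemma standard_box_subset_box: "standard_box (subset_box S)"
  unfolding standard_box_def subset_box_def by (rule exI, rule exI, rule conjI[OF _ refl]) simp

lemma interval_lowerbound_subset_box:
  "interval_lowerbound (subset_box S) = (\<chi> i. if i \<in> S then 0 else 1)"
proof -
  have "(\<chi> i. if i \<in> S then 0 else 1) \<in> subset_box S"
    unfolding subset_box_def by (simp add: mem_box_cart)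
  then show ?thesis
    unfolding subset_box_def by (intro interval_bounds') blast
qed

lemma inj_subset_box: "inj subset_box"
proof (rule injI)
  fix S T :: "'n::finite set"
  assume "subset_box S = subset_box T"
  then have "interval_lowerbound (subset_box S) = interval_lowerbound (subset_box T)"
    by simp
  then have "(\<chi> i. if i \<in> S then 0 else 1) = (\<chi> i. if i \<in> T then 0 else (1::real))"
    by (simp only: interval_lowerbound_subset_box)
  then have "(if i \<in> S then 0 else 1) = (if i \<in> T then 0 else (1::real))" for i
    by (simp add: vec_eq_iff)
  then have "(i \<in> S) = (i \<in> T)" for i
    by (smt (verit))
  then show "S = T"
    by blast
qed

lemma k_neighborly_subset_box_iff:
  "k_neighborly k (subset_box S) (subset_box T) \<longleftrightarrow> S \<noteq> T \<and> card (sym_diff S T) \<le> k"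
proof -
  let ?T = "{i. (if i \<in> S then 1 else 2) = (if i \<in> T then 0 else (1::real)) \<or>
                (if i \<in> T then 1 else 2) = (if i \<in> S then 0 else (1::real))}"
  have touching: "?T = sym_diff S T"
    by auto
  have "k_neighborly k (subset_box S) (subset_box T) \<longleftrightarrow> ?T \<noteq> {} \<and> card ?T \<le> k"
    unfolding subset_box_def by (subst k_neighborly_cbox_iff) simp_all
  also have "\<dots> \<longleftrightarrow> S \<noteq> T \<and> card (sym_diff S T) \<le> k"
    unfolding touching by blast
  finally show ?thesis .
qed

lemma enat_card_le_n_nb:
  fixes F :: "(real^'n) set set"
  assumes "k_neighborly_family k F" "finite F"
  shows "enat (card F) \<le> n_nb k TYPE('n)"
  unfolding n_nb_def using assms by (intro Sup_upper image_eqI[where x = F]) simp_all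

lemma n_nb_le_enat:
  assumes "\<And>F :: (real^'n) set set. k_neighborly_family k F \<Longrightarrow> finite F \<Longrightarrow> card F \<le> B"
  shows "n_nb k TYPE('n) \<le> enat B"
  unfolding n_nb_def
proof (rule Sup_least, clarify)
  fix F :: "(real^'n) set set"
  assume F: "k_neighborly_family k F"
  show "(if finite F then enat (card F) else \<infinity>) \<le> enat B"
  proof (cases "finite F")
    case False
    from infinite_arbitrarily_large[OF False, of "Suc B"]
    obtain F' where "finite F'" "card F' = Suc B" "F' \<subseteq> F"
      by (elim exE conjE)
    moreover have "k_neighborly_family k F'"
      using F \<open>F' \<subseteq> F\<close> unfolding k_neighborly_family_def by (meson subsetD)
    ultimately have False
      using assms[of F'] by simp
    then show ?thesis ..
  qed (use assms F in simp)
qed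

lemma n_nb_ge_sum_choose:
  "enat (\<Sum>i=0..k div 2. CARD('n) choose i) \<le> n_nb k TYPE('n::finite)"
proof -
  let ?A = "{S :: 'n set. S \<subseteq> UNIV \<and> card S \<le> k div 2}"
  have "k_neighborly_family k (subset_box ` ?A)"
    unfolding k_neighborly_family_def
  proof (intro conjI ballI impI)
    fix K L assume "K \<in> subset_box ` ?A" "L \<in> subset_box ` ?A" "K \<noteq> L"
    then obtain S T where ST: "S \<in> ?A" "T \<in> ?A" "K = subset_box S" "L = subset_box T" "S \<noteq> T"
      by blast
    have "card (sym_diff S T) \<le> card S + card T"
      by (meson card_Un_le card_mono Diff_subset add_mono order_trans finite)
    also have "\<dots> \<le> k"
      using ST by simp
    finally show "k_neighborly k K L"
      using ST by (simp add: k_neighborly_subset_box_iff)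
  qed (auto simp: standard_box_subset_box)
  then have "enat (card (subset_box ` ?A)) \<le> n_nb k TYPE('n)"
    by (rule enat_card_le_n_nb) simp
  also have "card (subset_box ` ?A) = card ?A"
    by (rule card_image[OF inj_on_subset[OF inj_subset_box subset_UNIV]])
  also have "card ?A = (\<Sum>i=0..k div 2. CARD('n) choose i)"
    by (rule card_subsets_card_le) simp
  finally show ?thesis .
qed

lemma standard_box_bounds:
  assumes "standard_box K"
  shows "K = cbox (interval_lowerbound K) (interval_upperbound K)"
    and "interval_lowerbound K $ i < interval_upperbound K $ i"
proof -
  obtain a b where ab: "\<forall>i. a$i < b$i" "K = cbox a b"
    using assms unfolding standard_box_def by blast
  then have "a \<in> K"
    by (simp add: mem_box_cart less_imp_le)
  then have bounds: "interval_lowerbound K = a" "interval_upperbound K = b"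
    unfolding ab(2) by (intro interval_bounds'; blast)+
  show "K = cbox (interval_lowerbound K) (interval_upperbound K)"
    unfolding bounds by (rule ab(2))
  show "interval_lowerbound K $ i < interval_upperbound K $ i"
    unfolding bounds using ab(1) by blast
qed

lemma common_point_of_meeting_boxes:
  fixes lo hi :: "'b \<Rightarrow> real^'n"
  assumes "finite G" "G \<noteq> {}" "\<And>K L i. K \<in> G \<Longrightarrow> L \<in> G \<Longrightarrow> lo K $ i \<le> hi L $ i"
  shows "\<exists>P. \<forall>K\<in>G. \<forall>i. lo K $ i \<le> P $ i \<and> P $ i \<le> hi K $ i"
proof (intro exI ballI allI conjI)
  let ?P = "\<chi> i. Max ((\<lambda>K. lo K $ i) ` G)"
  fix K i assume "K \<in> G"
  then show "lo K $ i \<le> ?P $ i"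
    using assms(1) by (simp add: Max_ge)
  have "?P $ i \<in> (\<lambda>K. lo K $ i) ` G"
    using assms(1,2) by (simp add: Max_in)
  then obtain M where "M \<in> G" "?P $ i = lo M $ i"
    by blast
  then show "?P $ i \<le> hi K $ i"
    using assms(3)[OF \<open>M \<in> G\<close> \<open>K \<in> G\<close>, of i] by linarith
qed

lemma lowerbound_le_upperbound_if_k_neighborly_family:
  assumes family: "k_neighborly_family k G" and "k \<le> CARD('n)" "K \<in> G" "L \<in> G"
  shows "interval_lowerbound K $ i \<le> interval_upperbound (L :: (real^'n) set) $ i"
proof -
  have boxes: "standard_box K" "standard_box L"
    using family \<open>K \<in> G\<close> \<open>L \<in> G\<close> unfolding k_neighborly_family_def by blast+
  show ?thesis
  proof (cases "K = L")
    case False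
    then have "K \<inter> L \<noteq> {}"
      using family assms(2-4) k_neighborly_imp_Int_nonempty unfolding k_neighborly_family_def by blast
    then obtain x where "x \<in> K" "x \<in> L"
      by blast
    then have "interval_lowerbound K $ i \<le> x $ i" "x $ i \<le> interval_upperbound L $ i"
      using standard_box_bounds(1)[OF boxes(1)] standard_box_bounds(1)[OF boxes(2)]
      by (metis mem_box_cart(2))+
    then show ?thesis
      by linarith
  qed (use standard_box_bounds(2)[OF boxes(1)] in \<open>simp add: less_imp_le\<close>)
qed

lemma touching_coordinates_through_point:
  fixes a b c e P :: "real^'n"
  assumes "\<forall>i. a$i \<le> P$i \<and> P$i \<le> b$i" "\<forall>i. c$i \<le> P$i \<and> P$i \<le> e$i"
  shows "{i. b$i = c$i \<or> e$i = a$i} =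
    {i. b$i = P$i} \<inter> {i. c$i = P$i} \<union> {i. a$i = P$i} \<inter> {i. e$i = P$i}"
proof (rule set_eqI)
  fix i
  have "a$i \<le> P$i" "P$i \<le> b$i" "c$i \<le> P$i" "P$i \<le> e$i"
    using assms by auto
  then show "i \<in> {i. b$i = c$i \<or> e$i = a$i} \<longleftrightarrow>
      i \<in> {i. b$i = P$i} \<inter> {i. c$i = P$i} \<union> {i. a$i = P$i} \<inter> {i. e$i = P$i}"
    by auto
qed

lemma card_k_neighborly_family_le:
  fixes G :: "(real^'n) set set"
  assumes family: "k_neighborly_family k G" and "finite G"
    and "k + 2*(t-1) \<le> 2*r" "k + 2*(t-1) < CARD('n)"
  shows "card G \<le> 2^(CARD('n) - t) + (\<Sum>i=0..r. CARD('n) choose i)"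
proof (cases "G = {}")
  case False
  define lo where "lo K = interval_lowerbound K" for K :: "(real^'n) set"
  define hi where "hi K = interval_upperbound K" for K :: "(real^'n) set"
  have box: "K = cbox (lo K) (hi K)" "\<forall>i. lo K $ i < hi K $ i" if "K \<in> G" for K
    using family that standard_box_bounds unfolding lo_def hi_def k_neighborly_family_def by blast+
  have meet: "lo K $ i \<le> hi L $ i" if "K \<in> G" "L \<in> G" for K L i
    unfolding lo_def hi_def using lowerbound_le_upperbound_if_k_neighborly_family[OF family _ that]
      assms(4) by simp
  from common_point_of_meeting_boxes[of G lo hi, OF \<open>finite G\<close> False meet]
  obtain P where P: "\<forall>K\<in>G. \<forall>i. lo K $ i \<le> P $ i \<and> P $ i \<le> hi K $ i" ..
  define zeros where "zeros K = {i. hi K $ i = P $ i}" for K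
  define ones where "ones K = {i. lo K $ i = P $ i}" for K
  have letters_touching: "zeros K \<inter> ones L \<union> ones K \<inter> zeros L \<noteq> {} \<and>
      card (zeros K \<inter> ones L \<union> ones K \<inter> zeros L) \<le> k"
    if "K \<in> G" "L \<in> G" "K \<noteq> L" for K L
  proof -
    have "k_neighborly k K L"
      using family that unfolding k_neighborly_family_def by blast
    moreover have "\<forall>i. lo K $ i \<le> hi L $ i \<and> lo L $ i \<le> hi K $ i"
      using meet that by blast
    moreover have "{i. hi K $ i = lo L $ i \<or> hi L $ i = lo K $ i} = zeros K \<inter> ones L \<union> ones K \<inter> zeros L"
      unfolding zeros_def ones_def using P that by (intro touching_coordinates_through_point) auto
    ultimately show ?thesis
      using k_neighborly_cbox_iff[OF box(2)[OF that(1)] box(2)[OF that(2)]] box that by auto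
  qed
  interpret ternary_words UNIV G zeros ones
  proof
    show "zeros K \<inter> ones K = {}" if "K \<in> G" for K
    proof -
      have "lo K $ i \<noteq> P $ i" if "hi K $ i = P $ i" for i
        using box(2)[OF \<open>K \<in> G\<close>] that by (metis less_irrefl)
      then show ?thesis
        unfolding zeros_def ones_def by blast
    qed
  qed (use letters_touching \<open>finite G\<close> in auto)
  show ?thesis
  proof (rule card_le)
    show "card (zeros K \<inter> ones L \<union> ones K \<inter> zeros L) \<le> k"
      if "K \<in> G" "L \<in> G" "K \<noteq> L" for K L
      using letters_touching[OF that] by blast
  qed (use assms(3,4) in simp_all)
qed simp

theorem theorem1:
  shows "(\<forall>k. 1 \<le> k \<and> k \<le> CARD('n::finite) - 1 \<longrightarrow>
           enat (\<Sum>i = 0..k div 2. CARD('n) choose i) \<le> n_nb k TYPE('n)) \<and>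
         (\<forall>k t. 1 \<le> k \<and> 1 \<le> t \<and> k \<le> k + 2 * t - 2 \<and> k + 2 * t - 2 \<le> CARD('n) - 1 \<longrightarrow>
           n_nb k TYPE('n) \<le>
             enat (2 ^ (CARD('n) - t) +
                   (\<Sum>i = 0..nat \<lceil>real (k + 2 * t - 2) / 2\<rceil>. CARD('n) choose i)))"
proof (intro conjI allI impI)
  fix k :: nat
  show "enat (\<Sum>i = 0..k div 2. CARD('n) choose i) \<le> n_nb k TYPE('n)"
    by (rule n_nb_ge_sum_choose)
next
  fix k t :: nat
  assume kt: "1 \<le> k \<and> 1 \<le> t \<and> k \<le> k + 2 * t - 2 \<and> k + 2 * t - 2 \<le> CARD('n) - 1"
  then have "k + 2*(t-1) = k + 2*t - 2"
    by arith
  moreover have "k + 2*t - 2 \<le> 2 * nat \<lceil>real (k + 2*t - 2) / 2\<rceil>"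
    by linarith
  ultimately show "n_nb k TYPE('n) \<le> enat (2 ^ (CARD('n) - t) +
                   (\<Sum>i = 0..nat \<lceil>real (k + 2 * t - 2) / 2\<rceil>. CARD('n) choose i))"
    using kt by (intro n_nb_le_enat card_k_neighborly_family_le) auto
qed

end
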